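(* Let $(G,\oplus)$ be a gyrogroup and let $S\subseteq G\setminus\{e\}$ be symmetric such that $\mathrm{gyr}[g,g'](S)=S$ for all $g,g'\in G$. Then the R-Cayley graph $\mathrm{RCay}(G,S)$ is vertex-transitive.
   Context: A gyrogroup is a nonempty set $G$ with a binary operation $\oplus$ such that: (i) there is a unique $e\in G$ with $e\oplus x=x=x\oplus e$ for all $x$; (ii) each $x\in G$ has a unique inverse $\ominus x$ with $\ominus x\oplus x=e=x\oplus(\ominus x)$; (iii) for all $x,y\in G$ there is an automorphism $\mathrm{gyr}[x,y]$ of $(G,\oplus)$ with $x\oplus(y\oplus z)=(x\oplus y)\oplus \mathrm{gyr}[x,y](z)$ for all $z\in G$; (iv) $\mathrm{gyr}[x\oplus y,y]=\mathrm{gyr}[x,y]$ for all $x,y$. A subset $S\subseteq G$ is symmetric if $\ominus s\in S$ for every $s\in S$. For $S\subseteq G$ with $e\notin S$, the R-Cayley graph $\mathrm{RCay}(G,S)$ is the directed graph with vertex set $G$ and a directed edge $u\to v$ iff $v=u\oplus s$ for some $s\in S$. A (directed) graph is (vertex-)transitive if for any two vertices $u,v$ there is a graph automorphism (a bijection of vertices preserving directed edges in both directions) sending $u$ to $v$. *)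

theory Defs
  imports Main
begin

text \<open>The gyration map gyr x y is carried as an explicit parameter, required to satisfy
  axioms (iii) and (iv); by left cancellation it is uniquely determined by op.\<close>

definition gyro_ident :: "'a set \<Rightarrow> ('a \<Rightarrow> 'a \<Rightarrow> 'a) \<Rightarrow> 'a" where
  "gyro_ident G op = (THE e. e \<in> G \<and> (\<forall>x\<in>G. op e x = x \<and> op x e = x))"

definition gyro_inv :: "'a set \<Rightarrow> ('a \<Rightarrow> 'a \<Rightarrow> 'a) \<Rightarrow> 'a \<Rightarrow> 'a" where
  "gyro_inv G op x = (THE y. y \<in> G \<and> op y x = gyro_ident G op \<and> op x y = gyro_ident G op)"

definition gyro_aut :: "'a set \<Rightarrow> ('a \<Rightarrow> 'a \<Rightarrow> 'a) \<Rightarrow> ('a \<Rightarrow> 'a) \<Rightarrow> bool" where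
  "gyro_aut G op f \<longleftrightarrow> bij_betw f G G \<and> (\<forall>a\<in>G. \<forall>b\<in>G. f (op a b) = op (f a) (f b))"

definition gyrogroup :: "'a set \<Rightarrow> ('a \<Rightarrow> 'a \<Rightarrow> 'a) \<Rightarrow> ('a \<Rightarrow> 'a \<Rightarrow> 'a \<Rightarrow> 'a) \<Rightarrow> bool" where
  "gyrogroup G op gyr \<longleftrightarrow>
     G \<noteq> {} \<and>
     (\<forall>x\<in>G. \<forall>y\<in>G. op x y \<in> G) \<and>
     (\<exists>!e. e \<in> G \<and> (\<forall>x\<in>G. op e x = x \<and> op x e = x)) \<and>
     (\<forall>x\<in>G. \<exists>!y. y \<in> G \<and> op y x = gyro_ident G op \<and> op x y = gyro_ident G op) \<and>
     (\<forall>x\<in>G. \<forall>y\<in>G. gyro_aut G op (gyr x y) \<and>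
        (\<forall>z\<in>G. op x (op y z) = op (op x y) (gyr x y z))) \<and>
     (\<forall>x\<in>G. \<forall>y\<in>G. \<forall>z\<in>G. gyr (op x y) y z = gyr x y z)"

definition gyro_symmetric :: "'a set \<Rightarrow> ('a \<Rightarrow> 'a \<Rightarrow> 'a) \<Rightarrow> 'a set \<Rightarrow> bool" where
  "gyro_symmetric G op S \<longleftrightarrow> (\<forall>s\<in>S. gyro_inv G op s \<in> S)"

definition rcay_edge :: "'a set \<Rightarrow> ('a \<Rightarrow> 'a \<Rightarrow> 'a) \<Rightarrow> 'a set \<Rightarrow> 'a \<Rightarrow> 'a \<Rightarrow> bool" where
  "rcay_edge G op S u v \<longleftrightarrow> u \<in> G \<and> v \<in> G \<and> (\<exists>s\<in>S. v = op u s)"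

definition digraph_aut :: "'a set \<Rightarrow> ('a \<Rightarrow> 'a \<Rightarrow> bool) \<Rightarrow> ('a \<Rightarrow> 'a) \<Rightarrow> bool" where
  "digraph_aut V E f \<longleftrightarrow> bij_betw f V V \<and> (\<forall>x\<in>V. \<forall>y\<in>V. E x y \<longleftrightarrow> E (f x) (f y))"

definition vertex_transitive :: "'a set \<Rightarrow> ('a \<Rightarrow> 'a \<Rightarrow> bool) \<Rightarrow> bool" where
  "vertex_transitive V E \<longleftrightarrow> (\<forall>u\<in>V. \<forall>v\<in>V. \<exists>f. digraph_aut V E f \<and> f u = v)"

end

theory Submission
  imports Defs
begin

text \<open>Left translations x \<mapsto> a \<oplus> x are bijections of G, and the left gyroassociative law
  a \<oplus> (x \<oplus> s) = (a \<oplus> x) \<oplus> gyr[a,x] s shows that they map the edge labelled s at x to the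
  edge labelled gyr[a,x] s at a \<oplus> x. Gyration invariance of S therefore makes every left
  translation a graph automorphism, and (v \<oplus>) \<circ> (\<ominus>u \<oplus>) sends u to v.\<close>

lemma digraph_aut_comp:
  assumes "digraph_aut V E f" and "digraph_aut V E g"
  shows "digraph_aut V E (f \<circ> g)"
proof -
  have bij_f: "bij_betw f V V" and bij_g: "bij_betw g V V"
    using assms unfolding digraph_aut_def by auto
  have "E x y \<longleftrightarrow> E (f (g x)) (f (g y))" if "x \<in> V" "y \<in> V" for x y
  proof -
    have "g x \<in> V" "g y \<in> V"
      using bij_betw_apply[OF bij_g] that by auto
    then show ?thesis
      using assms that unfolding digraph_aut_def by blast
  qed
  then show ?thesis
    using bij_betw_trans[OF bij_g bij_f] unfolding digraph_aut_def by simp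
qed

locale gyrogroup_struct =
  fixes G :: "'a set" and op :: "'a \<Rightarrow> 'a \<Rightarrow> 'a" and gyr :: "'a \<Rightarrow> 'a \<Rightarrow> 'a \<Rightarrow> 'a"
  assumes gyrogroup: "gyrogroup G op gyr"
begin

abbreviation "e \<equiv> gyro_ident G op"
abbreviation "ginv \<equiv> gyro_inv G op"

lemma gyrogroup_laws:
  "\<forall>x\<in>G. \<forall>y\<in>G. op x y \<in> G"
  "\<exists>!e. e \<in> G \<and> (\<forall>x\<in>G. op e x = x \<and> op x e = x)"
  "\<forall>x\<in>G. \<exists>!y. y \<in> G \<and> op y x = e \<and> op x y = e"
  "\<forall>x\<in>G. \<forall>y\<in>G. gyro_aut G op (gyr x y) \<and>
     (\<forall>z\<in>G. op x (op y z) = op (op x y) (gyr x y z))"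
  "\<forall>x\<in>G. \<forall>y\<in>G. \<forall>z\<in>G. gyr (op x y) y z = gyr x y z"
  using gyrogroup unfolding gyrogroup_def by simp_all

lemma closed: "x \<in> G \<Longrightarrow> y \<in> G \<Longrightarrow> op x y \<in> G"
  using gyrogroup_laws(1) by blast

lemma ident: "e \<in> G" "x \<in> G \<Longrightarrow> op e x = x" "x \<in> G \<Longrightarrow> op x e = x"
  using theI'[OF gyrogroup_laws(2)] unfolding gyro_ident_def by auto

lemma inverse:
  assumes "x \<in> G"
  shows "ginv x \<in> G" "op (ginv x) x = e" "op x (ginv x) = e"
  using theI'[OF bspec[OF gyrogroup_laws(3) assms]] unfolding gyro_inv_def by auto

lemma left_gyroassoc:
  "x \<in> G \<Longrightarrow> y \<in> G \<Longrightarrow> z \<in> G \<Longrightarrow> op x (op y z) = op (op x y) (gyr x y z)"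
  using gyrogroup_laws(4) by blast

lemma left_loop: "x \<in> G \<Longrightarrow> y \<in> G \<Longrightarrow> z \<in> G \<Longrightarrow> gyr (op x y) y z = gyr x y z"
  using gyrogroup_laws(5) by blast

lemma bij_betw_gyr: "x \<in> G \<Longrightarrow> y \<in> G \<Longrightarrow> bij_betw (gyr x y) G G"
  using gyrogroup_laws(4) unfolding gyro_aut_def by blast

lemma gyr_closed: "x \<in> G \<Longrightarrow> y \<in> G \<Longrightarrow> z \<in> G \<Longrightarrow> gyr x y z \<in> G"
  by (rule bij_betw_apply[OF bij_betw_gyr])

lemma left_cancel:
  assumes a: "a \<in> G" and "b \<in> G" "c \<in> G" and "op a b = op a c"
  shows "b = c"
proof -
  have "op (ginv a) (op a z) = gyr (ginv a) a z" if "z \<in> G" for z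
    using left_gyroassoc[OF inverse(1)[OF a] a that] inverse[OF a] ident
      gyr_closed[OF inverse(1)[OF a] a that] by simp
  then have "gyr (ginv a) a b = gyr (ginv a) a c"
    using assms by metis
  then show ?thesis
    using bij_betw_gyr[OF inverse(1)[OF a] a] assms unfolding bij_betw_def inj_on_def by blast
qed

lemma gyr_ident_left:
  assumes x: "x \<in> G" and z: "z \<in> G"
  shows "gyr e x z = z"
proof -
  have "op x z = op x (gyr e x z)"
    using left_gyroassoc[OF ident(1) x z] closed[OF x z] ident x by simp
  then show ?thesis
    using left_cancel[OF x z gyr_closed[OF ident(1) x z]] by simp
qed

text \<open>The left loop property collapses gyr[a, \<ominus>a] to gyr[e, \<ominus>a], which is trivial.\<close>
lemma left_inverse_law:
  assumes a: "a \<in> G" and y: "y \<in> G"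
  shows "op a (op (ginv a) y) = y"
proof -
  have "op a (op (ginv a) y) = gyr a (ginv a) y"
    using left_gyroassoc[OF a inverse(1)[OF a] y] inverse[OF a]
      ident(2)[OF gyr_closed[OF a inverse(1)[OF a] y]] by simp
  also have "\<dots> = gyr e (ginv a) y"
    using left_loop[OF a inverse(1)[OF a] y] inverse(3)[OF a] by simp
  also have "\<dots> = y"
    using gyr_ident_left[OF inverse(1)[OF a] y] .
  finally show ?thesis .
qed

lemma bij_betw_left_translation:
  assumes a: "a \<in> G"
  shows "bij_betw (op a) G G"
proof (rule bij_betw_imageI)
  show "inj_on (op a) G"
    using left_cancel[OF a] by (meson inj_onI)
  have "y \<in> op a ` G" if "y \<in> G" for y
    using left_inverse_law[OF a that] closed[OF inverse(1)[OF a] that] by (metis image_eqI)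
  then show "op a ` G = G"
    using closed[OF a] by blast
qed

lemma rcay_edge_left_translation:
  assumes a: "a \<in> G" and x: "x \<in> G" and y: "y \<in> G"
    and S: "S \<subseteq> G" and gyr_S: "gyr a x ` S = S"
  shows "rcay_edge G op S (op a x) (op a y) \<longleftrightarrow> rcay_edge G op S x y"
proof -
  have "op a y = op (op a x) (gyr a x s) \<longleftrightarrow> y = op x s" if "s \<in> S" for s
    using left_gyroassoc[OF a x] left_cancel[OF a y closed[OF x]] S that by auto
  then have "(\<exists>t\<in>gyr a x ` S. op a y = op (op a x) t) \<longleftrightarrow> (\<exists>s\<in>S. y = op x s)"
    by blast
  then have "(\<exists>t\<in>S. op a y = op (op a x) t) \<longleftrightarrow> (\<exists>s\<in>S. y = op x s)"
    unfolding gyr_S .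
  then show ?thesis
    unfolding rcay_edge_def using closed[OF a x] closed[OF a y] x y by simp
qed

lemma digraph_aut_left_translation:
  assumes "a \<in> G" and "S \<subseteq> G" and "\<forall>g\<in>G. \<forall>g'\<in>G. gyr g g' ` S = S"
  shows "digraph_aut G (rcay_edge G op S) (op a)"
  unfolding digraph_aut_def
  using bij_betw_left_translation[OF assms(1)] rcay_edge_left_translation[OF assms(1) _ _ assms(2)]
    assms(1,3) by simp

end

theorem mainTheorem4:
  fixes G :: "'a set" and op :: "'a \<Rightarrow> 'a \<Rightarrow> 'a" and gyr :: "'a \<Rightarrow> 'a \<Rightarrow> 'a \<Rightarrow> 'a"
    and S :: "'a set"
  assumes "gyrogroup G op gyr"
    and "S \<subseteq> G - {gyro_ident G op}"
    and "gyro_symmetric G op S"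
    and "\<forall>g\<in>G. \<forall>g'\<in>G. gyr g g' ` S = S"
  shows "vertex_transitive G (rcay_edge G op S)"
  unfolding vertex_transitive_def
proof (intro ballI)
  interpret gyrogroup_struct G op gyr
    using assms(1) by unfold_locales
  have S: "S \<subseteq> G"
    using assms(2) by blast
  fix u v assume u: "u \<in> G" and v: "v \<in> G"
  have "digraph_aut G (rcay_edge G op S) (op v \<circ> op (ginv u))"
    by (rule digraph_aut_comp[OF digraph_aut_left_translation[OF v S assms(4)]
          digraph_aut_left_translation[OF inverse(1)[OF u] S assms(4)]])
  moreover have "(op v \<circ> op (ginv u)) u = v"
    using inverse(2)[OF u] ident(3)[OF v] by simp
  ultimately show "\<exists>f. digraph_aut G (rcay_edge G op S) f \<and> f u = v"
    by blast
qed

end
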